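(* Let $\square$ be a category with $\Delta_1[\tau]^*\subset\square\subset\mathbf{Pos}$ subcategories, $\Delta_1[\tau]^*$ wide in $\square$. For a monotone function $\phi:P_1\to P_2$ between posets the following are equivalent: (1) there exists a unique morphism of presheaves $\square[\phi]:\square[P_1]\to\square[P_2]$ such that $\iota_{P_2}\circ\square[\phi]=\mathrm{ner}_\square(\phi)\circ\iota_{P_1}$, where $\iota_{P}:\square[P]\hookrightarrow\mathrm{ner}_\square P$ are the inclusions; (2) for each finite Boolean interval $I$ of $P_1$, the restriction of $\phi$ to $I$ corestricts to a monotone function $I\to J$, $J$ a Boolean interval of $P_2$, which is isomorphic in the arrow category $\mathbf{Pos}^{[1]}$ to a $\square$-morphism.
   Context: $[1]=\{0<1\}$, $[1]^n$ the product poset ($[1]^0=[0]$). $\tau:[1]^2\to[1]^2$, $\tau(x,y)=(y,x)$. $\Delta_1[\tau]^*$ is the smallest subcategory of $\mathbf{Set}$ containing all functions between $[0]$ and $[1]$ and $\tau$, and closed under Cartesian products of functions; its objects are the $[1]^n$; "wide" means $\square$ has the same objects. $\mathbf{Pos}$ is the category of posets and monotone maps. An interval in a poset $P$ is a non-empty subset $[x,z]_P=\{y:x\leq y\leq z\}$; it is a Boolean interval if it is a Boolean lattice (for finite ones: isomorphic to some $[1]^k$). A cubical set is a presheaf $\square^{op}\to\mathbf{Set}$. For a poset $P$, $\mathrm{ner}_\square P$ is the cubical set $[1]^n\mapsto\mathbf{Pos}([1]^n,P)$ (action by precomposition), and $\square[P]\subseteq\mathrm{ner}_\square P$ is the subpresheaf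 of those monotone $\theta:[1]^n\to P$ whose image lies in a Boolean interval $I$ of $P$ such that the corestriction $[1]^n\to I$ is isomorphic, under $[1]^n$ (i.e. after composing with a poset isomorphism $I\cong[1]^k$), to a $\square$-morphism. Two monotone maps $f:A\to B$, $f':A'\to B'$ are isomorphic in $\mathbf{Pos}^{[1]}$ if there are poset isomorphisms $A\cong A'$, $B\cong B'$ intertwining them. *)

theory Defs
  imports "HOL-Library.FuncSet"
begin

section \<open>Cubes [1]^n as boolean lists of length n, ordered pointwise\<close>

definition cube :: "nat \<Rightarrow> bool list set" where
  "cube n = {xs. length xs = n}"

definition cle :: "bool list \<Rightarrow> bool list \<Rightarrow> bool" where
  "cle xs ys \<longleftrightarrow> list_all2 (\<le>) xs ys"

definition cmono :: "nat \<Rightarrow> (bool list \<Rightarrow> bool list) \<Rightarrow> bool" where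
  "cmono m f \<longleftrightarrow> (\<forall>x\<in>cube m. \<forall>y\<in>cube m. cle x y \<longrightarrow> cle (f x) (f y))"

definition tau :: "bool list \<Rightarrow> bool list" where
  "tau xs = [xs ! 1, xs ! 0]"

definition cprod :: "nat \<Rightarrow> (bool list \<Rightarrow> bool list) \<Rightarrow> (bool list \<Rightarrow> bool list)
    \<Rightarrow> bool list \<Rightarrow> bool list" where
  "cprod a f g xs = f (take a xs) @ g (drop a xs)"

text \<open>The category Delta_1[tau]^*: D m n f means f is a morphism [1]^m -> [1]^n
  (functions are identified when they agree on [1]^m).\<close>
inductive D1tau :: "nat \<Rightarrow> nat \<Rightarrow> (bool list \<Rightarrow> bool list) \<Rightarrow> bool" where
  gen: "i \<le> 1 \<Longrightarrow> j \<le> 1 \<Longrightarrow> f ` cube i \<subseteq> cube j \<Longrightarrow> cmono i f \<Longrightarrow> D1tau i j f"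
| swap: "D1tau 2 2 tau"
| ident: "D1tau n n id"
| comp: "D1tau a b f \<Longrightarrow> D1tau b c g \<Longrightarrow> D1tau a c (g \<circ> f)"
| prod: "D1tau a b f \<Longrightarrow> D1tau c d g \<Longrightarrow> D1tau (a + c) (b + d) (cprod a f g)"
| ext: "D1tau m n f \<Longrightarrow> (\<forall>x\<in>cube m. f x = g x) \<Longrightarrow> D1tau m n g"

text \<open>A cube category: a subcategory of Pos on the objects [1]^n containing D1tau.\<close>
definition cube_cat :: "(nat \<Rightarrow> nat \<Rightarrow> (bool list \<Rightarrow> bool list) \<Rightarrow> bool) \<Rightarrow> bool" where
  "cube_cat Sq \<longleftrightarrow>
     (\<forall>m n f. Sq m n f \<longrightarrow> f ` cube m \<subseteq> cube n \<and> cmono m f)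
   \<and> (\<forall>n. Sq n n id)
   \<and> (\<forall>a b c f g. Sq a b f \<longrightarrow> Sq b c g \<longrightarrow> Sq a c (g \<circ> f))
   \<and> (\<forall>m n f g. Sq m n f \<longrightarrow> (\<forall>x\<in>cube m. f x = g x) \<longrightarrow> Sq m n g)
   \<and> (\<forall>m n f. D1tau m n f \<longrightarrow> Sq m n f)"

definition order_iso_cube :: "('a::order \<Rightarrow> bool list) \<Rightarrow> 'a set \<Rightarrow> nat \<Rightarrow> bool" where
  "order_iso_cube h A k \<longleftrightarrow> bij_betw h A (cube k) \<and>
     (\<forall>x\<in>A. \<forall>y\<in>A. x \<le> y \<longleftrightarrow> cle (h x) (h y))"

definition is_interval :: "'a::order set \<Rightarrow> bool" where
  "is_interval I \<longleftrightarrow> (\<exists>x z. x \<le> z \<and> I = {x..z})"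

definition fin_bool_interval :: "'a::order set \<Rightarrow> bool" where
  "fin_bool_interval I \<longleftrightarrow> is_interval I \<and> (\<exists>k h. order_iso_cube h I k)"

text \<open>n-cells of ner P: monotone maps [1]^n -> P, as extensional functions on cube n.\<close>
definition ner :: "nat \<Rightarrow> (bool list \<Rightarrow> 'a::order) set" where
  "ner n = {\<theta>. \<theta> \<in> extensional (cube n) \<and>
     (\<forall>x\<in>cube n. \<forall>y\<in>cube n. cle x y \<longrightarrow> \<theta> x \<le> \<theta> y)}"

definition act :: "nat \<Rightarrow> (bool list \<Rightarrow> bool list) \<Rightarrow> (bool list \<Rightarrow> 'a) \<Rightarrow> bool list \<Rightarrow> 'a" where
  "act m f \<theta> = restrict (\<theta> \<circ> f) (cube m)"

definition sqP :: "(nat \<Rightarrow> nat \<Rightarrow> (bool list \<Rightarrow> bool list) \<Rightarrow> bool) \<Rightarrow> nat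
    \<Rightarrow> (bool list \<Rightarrow> 'a::order) set" where
  "sqP Sq n = {\<theta>. \<theta> \<in> ner n \<and>
     (\<exists>I. fin_bool_interval I \<and> \<theta> ` cube n \<subseteq> I \<and>
        (\<exists>k h. order_iso_cube h I k \<and> Sq n k (h \<circ> \<theta>)))}"

definition psh_morph :: "(nat \<Rightarrow> nat \<Rightarrow> (bool list \<Rightarrow> bool list) \<Rightarrow> bool)
    \<Rightarrow> (nat \<Rightarrow> (bool list \<Rightarrow> 'a::order) \<Rightarrow> (bool list \<Rightarrow> 'b::order)) \<Rightarrow> bool" where
  "psh_morph Sq F \<longleftrightarrow>
     (\<forall>n. \<forall>\<theta>\<in>sqP Sq n. F n \<theta> \<in> sqP Sq n)
   \<and> (\<forall>m n f. \<forall>\<theta>\<in>sqP Sq n. Sq m n f \<longrightarrow> F m (act m f \<theta>) = act m f (F n \<theta>))"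

text \<open>iota_{P2} o F = ner(phi) o iota_{P1}.\<close>
definition lifts :: "(nat \<Rightarrow> nat \<Rightarrow> (bool list \<Rightarrow> bool list) \<Rightarrow> bool) \<Rightarrow> ('a::order \<Rightarrow> 'b::order)
    \<Rightarrow> (nat \<Rightarrow> (bool list \<Rightarrow> 'a) \<Rightarrow> (bool list \<Rightarrow> 'b)) \<Rightarrow> bool" where
  "lifts Sq \<phi> F \<longleftrightarrow> (\<forall>n. \<forall>\<theta>\<in>sqP Sq n. F n \<theta> = restrict (\<phi> \<circ> \<theta>) (cube n))"

end

theory Submission
  imports Defs "HOL-Combinatorics.Permutations"
begin

text \<open>
  By \<open>lifts\<close>, \<open>\<box>[\<phi>]\<close> can only be postcomposition with \<open>\<phi>\<close>, which is automatically natural; so (1)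
  says exactly that \<open>\<phi> \<circ> \<theta>\<close> is a cell of \<open>\<box>[P\<^sub>2]\<close> for every cell \<open>\<theta>\<close> of \<open>\<box>[P\<^sub>1]\<close>.
  Applied to the inverse of a chart \<open>I \<cong> [1]\<^sup>k\<close> of a finite Boolean interval this gives (2).
  Conversely, a cell \<open>\<theta>\<close> of \<open>\<box>[P\<^sub>1]\<close> is a \<open>\<box>\<close>-morphism through some chart \<open>h\<close> of an interval
  \<open>I\<close>, while (2) is stated through another chart \<open>\<alpha>\<close> of \<open>I\<close>. The two differ by an order automorphism
  of \<open>[1]\<^sup>k\<close>; such an automorphism permutes coordinates, hence is a product of adjacent
  transpositions \<open>id \<times> \<tau> \<times> id\<close> and lies in \<open>\<Delta>\<^sub>1[\<tau>]\<^sup>* \<subseteq> \<box>\<close>. Composing shows that \<open>\<phi> \<circ> \<theta>\<close>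
  is a cell of \<open>\<box>[P\<^sub>2]\<close>.
\<close>

section \<open>Coordinate permutations lie in \<open>\<Delta>\<^sub>1[\<tau>]\<^sup>*\<close>\<close>

lemma D1tau_cong:
  "D1tau m n f \<Longrightarrow> (\<And>x. x \<in> cube m \<Longrightarrow> f x = g x) \<Longrightarrow> D1tau m n g"
  using D1tau.ext by blast

definition swap_coords :: "nat \<Rightarrow> nat \<Rightarrow> bool list \<Rightarrow> bool list" where
  "swap_coords a b x = x[a := x ! b, b := x ! a]"

lemma length_swap_coords [simp]: "length (swap_coords a b x) = length x"
  by (simp add: swap_coords_def)

lemma nth_swap_coords:
  "a < length x \<Longrightarrow> b < length x \<Longrightarrow> i < length x \<Longrightarrow>
   swap_coords a b x ! i = x ! Transposition.transpose a b i"
  by (auto simp: swap_coords_def nth_list_update transpose_def)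

lemma swap_coords_commute: "swap_coords a b = swap_coords b a"
  by (cases "a = b") (auto simp: swap_coords_def fun_eq_iff list_update_swap)

lemma swap_coords_self: "swap_coords a a = id"
  by (simp add: swap_coords_def fun_eq_iff)

lemma D1tau_swap_adjacent:
  assumes "Suc i < k"
  shows "D1tau k k (swap_coords i (Suc i))"
proof -
  have k: "i + (2 + (k - Suc (Suc i))) = k"
    using assms by simp
  have "D1tau k k (cprod i id (cprod 2 tau id))"
    using D1tau.prod[OF D1tau.ident[of i] D1tau.prod[OF D1tau.swap D1tau.ident[of "k - Suc (Suc i)"]]]
    unfolding k .
  then show ?thesis
  proof (rule D1tau_cong)
    have on_split: "cprod i id (cprod 2 tau id) (ys @ a # b # zs) = swap_coords i (Suc i) (ys @ a # b # zs)"
      if "length ys = i" for ys a b zs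
      using that by (simp add: cprod_def tau_def swap_coords_def list_update_append nth_append)
    fix x assume "x \<in> cube k"
    then have "length x = k"
      by (simp add: cube_def)
    then have "x = take i x @ x ! i # x ! Suc i # drop (Suc (Suc i)) x" and "length (take i x) = i"
      using assms by (simp_all add: Cons_nth_drop_Suc)
    then show "cprod i id (cprod 2 tau id) x = swap_coords i (Suc i) x"
      using on_split by metis
  qed
qed

text \<open>\<open>(a, c + 1) = (c, c + 1) \<circ> (a, c) \<circ> (c, c + 1)\<close>, so adjacent transpositions suffice.\<close>

lemma D1tau_swap_coords_less: "a < b \<Longrightarrow> b < k \<Longrightarrow> D1tau k k (swap_coords a b)"
proof (induction b)
  case 0
  then show ?case by simp
next
  case (Suc c)
  show ?case
  proof (cases "a = c")
    case True
    then show ?thesis using D1tau_swap_adjacent Suc.prems by simp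
  next
    case False
    then have "a < c" using Suc.prems by simp
    have "D1tau k k (swap_coords c (Suc c) \<circ> (swap_coords a c \<circ> swap_coords c (Suc c)))"
      using Suc \<open>a < c\<close> D1tau_swap_adjacent[of c k] by (metis D1tau.comp Suc_lessD)
    then show ?thesis
    proof (rule D1tau_cong)
      fix x assume "x \<in> cube k"
      then have "length x = k" by (simp add: cube_def)
      then show "(swap_coords c (Suc c) \<circ> (swap_coords a c \<circ> swap_coords c (Suc c))) x
          = swap_coords a (Suc c) x"
        using Suc.prems \<open>a < c\<close>
        by (intro nth_equalityI) (auto simp: nth_swap_coords transpose_def)
    qed
  qed
qed

lemma D1tau_swap_coords: "a < k \<Longrightarrow> b < k \<Longrightarrow> D1tau k k (swap_coords a b)"
  using D1tau_swap_coords_less[of a b k] D1tau_swap_coords_less[of b a k] D1tau.ident[of k]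
  by (cases a b rule: linorder_cases) (auto simp: swap_coords_self swap_coords_commute)

lemma D1tau_permute_coords:
  assumes "p permutes {0..<k}"
    and "\<And>x. x \<in> cube k \<Longrightarrow> g x \<in> cube k"
    and "\<And>x j. x \<in> cube k \<Longrightarrow> j < k \<Longrightarrow> g x ! p j = x ! j"
  shows "D1tau k k g"
  using assms(1) finite_atLeastLessThan assms(2,3)
proof (induction p arbitrary: g rule: permutes_induct)
  case id
  show ?case
  proof (rule D1tau_cong[OF D1tau.ident])
    fix x assume "x \<in> cube k"
    then show "id x = g x"
      using id.prems by (intro nth_equalityI) (auto simp: cube_def)
  qed
next
  case (swap a b p)
  have len: "x \<in> cube k \<Longrightarrow> length (g x) = k" for x
    using swap.prems(1) by (simp add: cube_def)
  have "p j < k" if "j < k" for j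
    using swap.hyps(4) that permutes_in_image by fastforce
  then have "D1tau k k (swap_coords a b \<circ> g)"
    using swap.hyps(1,2) swap.prems len
    by (intro swap.IH) (auto simp: nth_swap_coords cube_def)
  then have "D1tau k k (swap_coords a b \<circ> (swap_coords a b \<circ> g))"
    by (rule D1tau.comp[OF _ D1tau_swap_coords]) (use swap.hyps(1,2) in auto)
  then show ?case
  proof (rule D1tau_cong)
    fix x assume "x \<in> cube k"
    then show "(swap_coords a b \<circ> (swap_coords a b \<circ> g)) x = g x"
      using len[of x] swap.hyps(1,2)
      by (intro nth_equalityI) (auto simp: nth_swap_coords transpose_def)
  qed
qed

section \<open>Order automorphisms of \<open>[1]\<^sup>k\<close>\<close>

lemma cle_iff_nth: "cle x y \<longleftrightarrow> length x = length y \<and> (\<forall>i<length x. x ! i \<longrightarrow> y ! i)"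
  by (auto simp: cle_def list_all2_conv_all_nth)

lemma cle_antisym: "cle x y \<Longrightarrow> cle y x \<Longrightarrow> x = y"
  by (auto simp: cle_iff_nth intro!: nth_equalityI)

lemma cube_card: "card (cube k) = 2 ^ k"
  using card_lists_length_eq[of "UNIV :: bool set" k] by (simp add: cube_def)

lemma bij_betw_cube_eq_dim: "bij_betw g (cube k) (cube m) \<Longrightarrow> k = m"
  using bij_betw_same_card[of g "cube k" "cube m"] by (simp add: cube_card)

definition unit_vec :: "nat \<Rightarrow> nat \<Rightarrow> bool list" where
  "unit_vec k j = (replicate k False)[j := True]"

lemma unit_vec_in_cube: "unit_vec k j \<in> cube k"
  by (simp add: unit_vec_def cube_def)

lemma nth_unit_vec: "i < k \<Longrightarrow> unit_vec k j ! i \<longleftrightarrow> i = j"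
  by (cases "j < k") (auto simp: unit_vec_def nth_list_update)

lemma unit_vec_cle_iff: "x \<in> cube k \<Longrightarrow> j < k \<Longrightarrow> cle (unit_vec k j) x \<longleftrightarrow> x ! j"
  by (auto simp: cle_iff_nth unit_vec_def cube_def nth_list_update)

lemma unit_vec_inj: "i < k \<Longrightarrow> j < k \<Longrightarrow> unit_vec k i = unit_vec k j \<Longrightarrow> i = j"
  by (metis nth_unit_vec)

lemma cle_replicate_False_iff: "x \<in> cube k \<Longrightarrow> cle x (replicate k False) \<longleftrightarrow> x = replicate k False"
proof
  assume "x \<in> cube k" "cle x (replicate k False)"
  then show "x = replicate k False"
    by (auto simp: cle_iff_nth cube_def intro!: nth_equalityI)
qed (simp add: cle_iff_nth)

lemma replicate_False_cle: "x \<in> cube k \<Longrightarrow> cle (replicate k False) x"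
  by (simp add: cle_iff_nth cube_def)

lemma cube_atom_iff_unit_vec:
  assumes "x \<in> cube k"
  shows "x \<noteq> replicate k False \<and> (\<forall>y\<in>cube k. cle y x \<longrightarrow> y = replicate k False \<or> y = x)
    \<longleftrightarrow> (\<exists>j<k. x = unit_vec k j)"
proof
  assume atom: "x \<noteq> replicate k False \<and> (\<forall>y\<in>cube k. cle y x \<longrightarrow> y = replicate k False \<or> y = x)"
  have "length x = k" using assms by (simp add: cube_def)
  have "\<exists>j<k. x ! j"
  proof (rule ccontr)
    assume "\<not> (\<exists>j<k. x ! j)"
    then have "x = replicate k False"
      using \<open>length x = k\<close> by (auto intro!: nth_equalityI)
    with atom show False by blast
  qed
  then obtain j where j: "j < k" "x ! j" by blast
  then have "cle (unit_vec k j) x"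
    using assms unit_vec_cle_iff by blast
  then have "unit_vec k j = replicate k False \<or> unit_vec k j = x"
    using atom unit_vec_in_cube by blast
  moreover have "unit_vec k j \<noteq> replicate k False"
    using j by (metis nth_replicate nth_unit_vec)
  ultimately show "\<exists>j<k. x = unit_vec k j"
    using j by metis
next
  assume "\<exists>j<k. x = unit_vec k j"
  then obtain j where j: "j < k" "x = unit_vec k j" by blast
  have "y = replicate k False \<or> y = x" if "y \<in> cube k" "cle y x" for y
  proof (cases "y ! j")
    case True
    then have "cle x y"
      using that(1) j unit_vec_cle_iff by blast
    then show ?thesis
      using that(2) cle_antisym by blast
  next
    case False
    have "\<not> y ! i" if "i < k" for i
    proof -
      have "y ! i \<longrightarrow> x ! i"
        using \<open>cle y x\<close> \<open>y \<in> cube k\<close> that by (simp add: cle_iff_nth cube_def)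
      moreover have "x ! i \<longleftrightarrow> i = j"
        using j that nth_unit_vec by simp
      ultimately show ?thesis
        using False by blast
    qed
    then show ?thesis
      using \<open>y \<in> cube k\<close> unfolding cube_def by (intro disjI1 nth_equalityI) auto
  qed
  moreover have "x \<noteq> replicate k False"
    using j by (metis nth_replicate nth_unit_vec)
  ultimately show "x \<noteq> replicate k False \<and> (\<forall>y\<in>cube k. cle y x \<longrightarrow> y = replicate k False \<or> y = x)"
    by blast
qed

definition cube_order_automorphism :: "nat \<Rightarrow> (bool list \<Rightarrow> bool list) \<Rightarrow> bool" where
  "cube_order_automorphism k g \<longleftrightarrow> bij_betw g (cube k) (cube k) \<and>
     (\<forall>x\<in>cube k. \<forall>y\<in>cube k. cle x y \<longleftrightarrow> cle (g x) (g y))"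

lemma cube_order_automorphism_fixes_bot:
  assumes "cube_order_automorphism k g"
  shows "g (replicate k False) = replicate k False"
proof -
  have bot: "replicate k False \<in> cube k"
    by (simp add: cube_def)
  obtain y where y: "y \<in> cube k" "g y = replicate k False"
    using assms bot unfolding cube_order_automorphism_def by (metis bij_betw_iff_bijections)
  have "cle (g (replicate k False)) (g y)"
    using assms bot y(1) replicate_False_cle unfolding cube_order_automorphism_def by blast
  then show ?thesis
    using assms bot y cle_replicate_False_iff
    unfolding cube_order_automorphism_def by (metis bij_betwE)
qed

lemma cube_order_automorphism_unit_vec:
  assumes g: "cube_order_automorphism k g" and "j < k"
  shows "\<exists>i<k. g (unit_vec k j) = unit_vec k i"
proof -
  let ?bot = "replicate k False"
  have bij: "bij_betw g (cube k) (cube k)"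
    and ord: "\<And>x y. x \<in> cube k \<Longrightarrow> y \<in> cube k \<Longrightarrow> cle x y \<longleftrightarrow> cle (g x) (g y)"
    using g by (auto simp: cube_order_automorphism_def)
  have u: "unit_vec k j \<in> cube k"
    by (rule unit_vec_in_cube)
  have atom: "unit_vec k j \<noteq> ?bot" "\<And>z. z \<in> cube k \<Longrightarrow> cle z (unit_vec k j) \<Longrightarrow> z = ?bot \<or> z = unit_vec k j"
    using cube_atom_iff_unit_vec[OF u] \<open>j < k\<close> by blast+
  have gbot: "g ?bot = ?bot" and bot: "?bot \<in> cube k"
    using cube_order_automorphism_fixes_bot[OF g] by (simp_all add: cube_def)
  have "g (unit_vec k j) \<noteq> ?bot"
    using atom(1) gbot bij_betw_imp_inj_on[OF bij] u bot by (metis inj_onD)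
  moreover have "y = ?bot \<or> y = g (unit_vec k j)" if "y \<in> cube k" "cle y (g (unit_vec k j))" for y
  proof -
    obtain z where z: "z \<in> cube k" "y = g z"
      using bij \<open>y \<in> cube k\<close> by (metis bij_betw_iff_bijections)
    then have "cle z (unit_vec k j)"
      using ord u that(2) by blast
    then show ?thesis
      using atom(2) z gbot by blast
  qed
  ultimately show ?thesis
    using cube_atom_iff_unit_vec[of "g (unit_vec k j)" k] bij u by (meson bij_betwE)
qed

text \<open>An order automorphism permutes the atoms \<open>unit_vec k j\<close>, and a point of the cube is determined
  by the atoms below it.\<close>

lemma cube_order_automorphism_permutes_coords:
  assumes g: "cube_order_automorphism k g"
  obtains s where "s permutes {0..<k}" and "\<And>x j. x \<in> cube k \<Longrightarrow> j < k \<Longrightarrow> g x ! s j = x ! j"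
proof -
  obtain s0 where s0: "\<And>j. j < k \<Longrightarrow> s0 j < k \<and> g (unit_vec k j) = unit_vec k (s0 j)"
    using cube_order_automorphism_unit_vec[OF g] by metis
  define s where "s j = (if j < k then s0 j else j)" for j
  have bij: "bij_betw g (cube k) (cube k)"
    and ord: "\<And>x y. x \<in> cube k \<Longrightarrow> y \<in> cube k \<Longrightarrow> cle x y \<longleftrightarrow> cle (g x) (g y)"
    using g by (auto simp: cube_order_automorphism_def)
  have "inj_on s {0..<k}"
  proof (rule inj_onI)
    fix i j assume ij: "i \<in> {0..<k}" "j \<in> {0..<k}" "s i = s j"
    then have "g (unit_vec k i) = g (unit_vec k j)"
      using s0 by (auto simp: s_def)
    then have "unit_vec k i = unit_vec k j"
      using bij_betw_imp_inj_on[OF bij] unit_vec_in_cube by (metis inj_onD)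
    then show "i = j"
      using unit_vec_inj ij by auto
  qed
  moreover have "s ` {0..<k} \<subseteq> {0..<k}"
    using s0 by (auto simp: s_def)
  ultimately have "s ` {0..<k} = {0..<k}"
    by (simp add: endo_inj_surj)
  then have "s permutes {0..<k}"
    using \<open>inj_on s {0..<k}\<close> by (intro bij_imp_permutes) (auto simp: bij_betw_def s_def)
  moreover have "g x ! s j = x ! j" if x: "x \<in> cube k" and j: "j < k" for x j
  proof -
    have gx: "g x \<in> cube k"
      using bij x bij_betwE by blast
    have "x ! j \<longleftrightarrow> cle (unit_vec k j) x"
      using unit_vec_cle_iff x j by simp
    also have "\<dots> \<longleftrightarrow> cle (g (unit_vec k j)) (g x)"
      using ord x unit_vec_in_cube by blast
    also have "\<dots> \<longleftrightarrow> g x ! s j"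
      using s0[OF j] unit_vec_cle_iff gx j by (simp add: s_def)
    finally show ?thesis by simp
  qed
  ultimately show ?thesis
    using that by blast
qed

lemma D1tau_cube_order_automorphism:
  assumes "cube_order_automorphism k g"
  shows "D1tau k k g"
proof -
  obtain s where s: "s permutes {0..<k}" "\<And>x j. x \<in> cube k \<Longrightarrow> j < k \<Longrightarrow> g x ! s j = x ! j"
    using cube_order_automorphism_permutes_coords[OF assms] by blast
  have "\<And>x. x \<in> cube k \<Longrightarrow> g x \<in> cube k"
    using assms unfolding cube_order_automorphism_def by (meson bij_betwE)
  then show ?thesis
    by (rule D1tau_permute_coords[OF s(1) _ s(2)])
qed

lemma
  assumes "order_iso_cube h I k"
  shows order_iso_cube_in: "x \<in> I \<Longrightarrow> h x \<in> cube k"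
    and order_iso_cube_inv_into_in: "y \<in> cube k \<Longrightarrow> inv_into I h y \<in> I"
    and order_iso_cube_f_inv_into: "y \<in> cube k \<Longrightarrow> h (inv_into I h y) = y"
    and order_iso_cube_inv_into_f: "x \<in> I \<Longrightarrow> inv_into I h (h x) = x"
  using assms by (auto simp: order_iso_cube_def bij_betw_def inv_into_into f_inv_into_f)

lemma order_iso_cube_inv_into_le_iff:
  assumes "order_iso_cube h I k" "x \<in> cube k" "y \<in> cube k"
  shows "inv_into I h x \<le> inv_into I h y \<longleftrightarrow> cle x y"
  using assms order_iso_cube_inv_into_in[OF assms(1)] order_iso_cube_f_inv_into[OF assms(1)]
  unfolding order_iso_cube_def by metis

lemma order_iso_cube_transition:
  assumes h: "order_iso_cube h I k" and \<alpha>: "order_iso_cube \<alpha> I m"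
  shows "m = k" and "cube_order_automorphism k (\<alpha> \<circ> inv_into I h)"
proof -
  have "bij_betw (\<alpha> \<circ> inv_into I h) (cube k) (cube m)"
    using h \<alpha> unfolding order_iso_cube_def by (meson bij_betw_inv_into bij_betw_trans)
  moreover from this show "m = k"
    using bij_betw_cube_eq_dim by metis
  moreover have "cle x y \<longleftrightarrow> cle ((\<alpha> \<circ> inv_into I h) x) ((\<alpha> \<circ> inv_into I h) y)"
    if "x \<in> cube k" "y \<in> cube k" for x y
    using that \<alpha> order_iso_cube_inv_into_in[OF h] order_iso_cube_inv_into_le_iff[OF h]
    unfolding order_iso_cube_def by simp
  ultimately show "cube_order_automorphism k (\<alpha> \<circ> inv_into I h)"
    by (simp add: cube_order_automorphism_def)
qed

section \<open>Cells of \<open>\<box>[P]\<close> under \<open>\<phi>\<close>\<close>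

lemma
  assumes "cube_cat Sq"
  shows cube_cat_maps_cube: "Sq m n f \<Longrightarrow> f ` cube m \<subseteq> cube n"
    and cube_cat_id: "Sq n n id"
    and cube_cat_comp: "Sq a b f \<Longrightarrow> Sq b c g \<Longrightarrow> Sq a c (g \<circ> f)"
    and cube_cat_cong: "Sq m n f \<Longrightarrow> (\<And>x. x \<in> cube m \<Longrightarrow> f x = g x) \<Longrightarrow> Sq m n g"
    and cube_cat_D1tau: "D1tau m n f \<Longrightarrow> Sq m n f"
  using assms unfolding cube_cat_def by blast+

text \<open>\<open>cell_map \<phi> n\<close> is \<open>ner\<^sub>\<box>(\<phi>)\<close> on \<open>n\<close>-cells.\<close>

definition cell_map :: "('a \<Rightarrow> 'b) \<Rightarrow> nat \<Rightarrow> (bool list \<Rightarrow> 'a) \<Rightarrow> bool list \<Rightarrow> 'b" where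
  "cell_map \<phi> n \<theta> = restrict (\<phi> \<circ> \<theta>) (cube n)"

lemma cell_map_act: "f ` cube m \<subseteq> cube n \<Longrightarrow> cell_map \<phi> m (act m f \<theta>) = act m f (cell_map \<phi> n \<theta>)"
  by (auto simp: cell_map_def act_def restrict_def fun_eq_iff)

lemma cell_map_in_ner: "mono \<phi> \<Longrightarrow> \<theta> \<in> ner n \<Longrightarrow> cell_map \<phi> n \<theta> \<in> ner n"
  by (auto simp: ner_def cell_map_def monoD)

lemma sqPI:
  assumes "\<theta> \<in> ner n" "fin_bool_interval I" "\<theta> ` cube n \<subseteq> I" "order_iso_cube h I k" "Sq n k (h \<circ> \<theta>)"
  shows "\<theta> \<in> sqP Sq n"
  unfolding sqP_def using assms by (intro CollectI conjI exI[of _ I] exI[of _ k] exI[of _ h])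

lemma sqPE:
  assumes "\<theta> \<in> sqP Sq n"
  obtains I k h where "\<theta> \<in> ner n" "fin_bool_interval I" "\<theta> ` cube n \<subseteq> I"
    "order_iso_cube h I k" "Sq n k (h \<circ> \<theta>)"
  using assms unfolding sqP_def by (elim CollectE conjE exE) (rule that)

lemma lifts_unique: "lifts Sq \<phi> F \<Longrightarrow> lifts Sq \<phi> G \<Longrightarrow> \<theta> \<in> sqP Sq n \<Longrightarrow> F n \<theta> = G n \<theta>"
  by (simp add: lifts_def)

lemma ex_lift_iff_cell_map_closed:
  assumes "cube_cat Sq"
  shows "(\<exists>F. psh_morph Sq F \<and> lifts Sq \<phi> F) \<longleftrightarrow> (\<forall>n. \<forall>\<theta>\<in>sqP Sq n. cell_map \<phi> n \<theta> \<in> sqP Sq n)"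
proof
  assume "\<exists>F. psh_morph Sq F \<and> lifts Sq \<phi> F"
  then show "\<forall>n. \<forall>\<theta>\<in>sqP Sq n. cell_map \<phi> n \<theta> \<in> sqP Sq n"
    by (auto simp: psh_morph_def lifts_def cell_map_def)
next
  assume "\<forall>n. \<forall>\<theta>\<in>sqP Sq n. cell_map \<phi> n \<theta> \<in> sqP Sq n"
  then have "psh_morph Sq (cell_map \<phi>)"
    by (simp add: psh_morph_def cell_map_act cube_cat_maps_cube[OF assms])
  moreover have "lifts Sq \<phi> (cell_map \<phi>)"
    by (simp add: lifts_def cell_map_def)
  ultimately show "\<exists>F. psh_morph Sq F \<and> lifts Sq \<phi> F"
    by blast
qed

text \<open>Condition (2) of the theorem for a single finite Boolean interval \<open>I\<close>.\<close>

definition Sq_morphism_on :: "(nat \<Rightarrow> nat \<Rightarrow> (bool list \<Rightarrow> bool list) \<Rightarrow> bool) \<Rightarrow> ('a::order \<Rightarrow> 'b::order)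
    \<Rightarrow> 'a set \<Rightarrow> bool" where
  "Sq_morphism_on Sq \<phi> I \<longleftrightarrow>
     (\<exists>J. fin_bool_interval J \<and> \<phi> ` I \<subseteq> J \<and>
        (\<exists>m n f \<alpha> \<beta>. Sq m n f \<and> order_iso_cube \<alpha> I m \<and> order_iso_cube \<beta> J n \<and>
           (\<forall>x\<in>I. \<beta> (\<phi> x) = f (\<alpha> x))))"

lemma Sq_morphism_onI:
  assumes "fin_bool_interval J" "\<phi> ` I \<subseteq> J" "Sq m n f" "order_iso_cube \<alpha> I m" "order_iso_cube \<beta> J n"
    "\<forall>x\<in>I. \<beta> (\<phi> x) = f (\<alpha> x)"
  shows "Sq_morphism_on Sq \<phi> I"
  unfolding Sq_morphism_on_def using assms
  by (intro exI[of _ J] conjI exI[of _ m] exI[of _ n] exI[of _ f] exI[of _ \<alpha>] exI[of _ \<beta>])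

lemma Sq_morphism_onE:
  assumes "Sq_morphism_on Sq \<phi> I"
  obtains J m n f \<alpha> \<beta> where "fin_bool_interval J" "\<phi> ` I \<subseteq> J" "Sq m n f"
    "order_iso_cube \<alpha> I m" "order_iso_cube \<beta> J n" "\<forall>x\<in>I. \<beta> (\<phi> x) = f (\<alpha> x)"
  using assms unfolding Sq_morphism_on_def by (elim exE conjE) (rule that)

lemma chart_inverse_in_sqP:
  assumes Sq: "cube_cat Sq" and I: "fin_bool_interval I" and \<alpha>: "order_iso_cube \<alpha> I k"
  shows "restrict (inv_into I \<alpha>) (cube k) \<in> sqP Sq k"
proof -
  let ?\<theta> = "restrict (inv_into I \<alpha>) (cube k)"
  have "?\<theta> \<in> ner k"
    using order_iso_cube_inv_into_le_iff[OF \<alpha>] by (simp add: ner_def)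
  moreover have "?\<theta> ` cube k \<subseteq> I"
    using order_iso_cube_inv_into_in[OF \<alpha>] by auto
  moreover have "Sq k k (\<alpha> \<circ> ?\<theta>)"
    using cube_cat_id[OF Sq]
    by (rule cube_cat_cong[OF Sq]) (simp add: order_iso_cube_f_inv_into[OF \<alpha>])
  \<comment> \<open>naming \<open>Sq\<close> avoids higher-order unification against the predicate variable \<open>?Sq\<close>\<close>
  ultimately show ?thesis
    using I \<alpha> by (intro sqPI[where Sq = Sq])
qed

lemma Sq_morphism_on_if_cell_map_closed:
  assumes Sq: "cube_cat Sq"
    and closed: "\<forall>n. \<forall>\<theta>\<in>sqP Sq n. cell_map \<phi> n \<theta> \<in> sqP Sq n"
    and I: "fin_bool_interval I"
  shows "Sq_morphism_on Sq \<phi> I"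
proof -
  obtain k \<alpha> where \<alpha>: "order_iso_cube \<alpha> I k"
    using I by (auto simp: fin_bool_interval_def)
  define \<theta> where "\<theta> = restrict (inv_into I \<alpha>) (cube k)"
  have "cell_map \<phi> k \<theta> \<in> sqP Sq k"
    using closed chart_inverse_in_sqP[OF Sq I \<alpha>] by (simp add: \<theta>_def)
  then obtain J \<beta> n where "cell_map \<phi> k \<theta> \<in> ner k"
    and J: "fin_bool_interval J" "cell_map \<phi> k \<theta> ` cube k \<subseteq> J"
    and \<beta>: "order_iso_cube \<beta> J n" "Sq k n (\<beta> \<circ> cell_map \<phi> k \<theta>)"
    by (rule sqPE)
  have chart: "cell_map \<phi> k \<theta> (\<alpha> x) = \<phi> x" if "x \<in> I" for x
    using that order_iso_cube_in[OF \<alpha>] order_iso_cube_inv_into_f[OF \<alpha>]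
    by (simp add: cell_map_def \<theta>_def)
  have "\<phi> ` I \<subseteq> J"
  proof (rule image_subsetI)
    fix x assume "x \<in> I"
    then have "cell_map \<phi> k \<theta> (\<alpha> x) \<in> J"
      using J(2) order_iso_cube_in[OF \<alpha>] by blast
    then show "\<phi> x \<in> J"
      using chart \<open>x \<in> I\<close> by simp
  qed
  moreover have "\<forall>x\<in>I. \<beta> (\<phi> x) = (\<beta> \<circ> cell_map \<phi> k \<theta>) (\<alpha> x)"
    using chart by simp
  ultimately show ?thesis
    by (rule Sq_morphism_onI[where Sq = Sq, OF J(1) _ \<beta>(2) \<alpha> \<beta>(1)])
qed

lemma cell_map_in_sqP_if_Sq_morphism_on:
  assumes Sq: "cube_cat Sq" and "mono \<phi>" and \<theta>: "\<theta> \<in> sqP Sq n"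
    and morph: "\<forall>I. fin_bool_interval I \<longrightarrow> Sq_morphism_on Sq \<phi> I"
  shows "cell_map \<phi> n \<theta> \<in> sqP Sq n"
proof -
  obtain I k h where ner: "\<theta> \<in> ner n" and I: "fin_bool_interval I" "\<theta> ` cube n \<subseteq> I"
    and h: "order_iso_cube h I k" "Sq n k (h \<circ> \<theta>)"
    using \<theta> by (rule sqPE)
  have "Sq_morphism_on Sq \<phi> I"
    using morph I(1) by blast
  then obtain J m n' f \<alpha> \<beta> where J: "fin_bool_interval J" "\<phi> ` I \<subseteq> J"
    and f: "Sq m n' f" "order_iso_cube \<alpha> I m" "order_iso_cube \<beta> J n'"
    "\<forall>x\<in>I. \<beta> (\<phi> x) = f (\<alpha> x)"
    by (rule Sq_morphism_onE)
  have "m = k"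
    by (rule order_iso_cube_transition(1)[OF h(1) f(2)])
  with f(1) have "Sq k n' f"
    by simp
  \<comment> \<open>the two charts of \<open>I\<close> differ by a cube automorphism, which lies in \<open>\<Delta>\<^sub>1[\<tau>]\<^sup>*\<close>\<close>
  have "Sq k k (\<alpha> \<circ> inv_into I h)"
    using order_iso_cube_transition(2)[OF h(1) f(2)]
    by (intro cube_cat_D1tau[OF Sq] D1tau_cube_order_automorphism)
  with h(2) have "Sq n k ((\<alpha> \<circ> inv_into I h) \<circ> (h \<circ> \<theta>))"
    by (rule cube_cat_comp[OF Sq])
  then have "Sq n n' (f \<circ> ((\<alpha> \<circ> inv_into I h) \<circ> (h \<circ> \<theta>)))"
    using \<open>Sq k n' f\<close> by (rule cube_cat_comp[OF Sq])
  then have Sq_cell: "Sq n n' (\<beta> \<circ> cell_map \<phi> n \<theta>)"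
  proof (rule cube_cat_cong[OF Sq])
    fix x assume "x \<in> cube n"
    moreover from this have "\<theta> x \<in> I"
      using I(2) by blast
    ultimately show "(f \<circ> ((\<alpha> \<circ> inv_into I h) \<circ> (h \<circ> \<theta>))) x = (\<beta> \<circ> cell_map \<phi> n \<theta>) x"
      using f(4) order_iso_cube_inv_into_f[OF h(1)] by (simp add: cell_map_def)
  qed
  have "cell_map \<phi> n \<theta> ` cube n \<subseteq> J"
    using I(2) J(2) by (auto simp: cell_map_def)
  then show ?thesis
    by (rule sqPI[where Sq = Sq, OF cell_map_in_ner[OF \<open>mono \<phi>\<close> ner] J(1) _ f(3) Sq_cell])
qed

theorem mainTheorem13:
  fixes Sq :: "nat \<Rightarrow> nat \<Rightarrow> (bool list \<Rightarrow> bool list) \<Rightarrow> bool"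
    and \<phi> :: "'a::order \<Rightarrow> 'b::order"
  assumes "cube_cat Sq"
    and "mono \<phi>"
  shows "((\<exists>F :: nat \<Rightarrow> (bool list \<Rightarrow> 'a) \<Rightarrow> (bool list \<Rightarrow> 'b).
              psh_morph Sq F \<and> lifts Sq \<phi> F)
          \<and> (\<forall>F G :: nat \<Rightarrow> (bool list \<Rightarrow> 'a) \<Rightarrow> (bool list \<Rightarrow> 'b).
              psh_morph Sq F \<and> lifts Sq \<phi> F \<longrightarrow> psh_morph Sq G \<and> lifts Sq \<phi> G \<longrightarrow>
              (\<forall>n. \<forall>\<theta>\<in>sqP Sq n. F n \<theta> = G n \<theta>)))
     \<longleftrightarrow>
     (\<forall>I :: 'a set. fin_bool_interval I \<longrightarrow>
        (\<exists>J :: 'b set. fin_bool_interval J \<and> \<phi> ` I \<subseteq> J \<and>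
           (\<exists>m n f \<alpha> \<beta>. Sq m n f \<and> order_iso_cube \<alpha> I m \<and> order_iso_cube \<beta> J n \<and>
              (\<forall>x\<in>I. \<beta> (\<phi> x) = f (\<alpha> x)))))"
proof -
  have "(\<exists>F :: nat \<Rightarrow> (bool list \<Rightarrow> 'a) \<Rightarrow> (bool list \<Rightarrow> 'b).
      psh_morph Sq F \<and> lifts Sq \<phi> F) \<longleftrightarrow> (\<forall>n. \<forall>\<theta>\<in>sqP Sq n. cell_map \<phi> n \<theta> \<in> sqP Sq n)"
    by (rule ex_lift_iff_cell_map_closed[OF assms(1)])
  also have "\<dots> \<longleftrightarrow> (\<forall>I. fin_bool_interval I \<longrightarrow> Sq_morphism_on Sq \<phi> I)"
    using Sq_morphism_on_if_cell_map_closed[OF assms(1)]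
      cell_map_in_sqP_if_Sq_morphism_on[OF assms] by blast
  finally have "(\<exists>F :: nat \<Rightarrow> (bool list \<Rightarrow> 'a) \<Rightarrow> (bool list \<Rightarrow> 'b).
      psh_morph Sq F \<and> lifts Sq \<phi> F) \<longleftrightarrow> (\<forall>I. fin_bool_interval I \<longrightarrow> Sq_morphism_on Sq \<phi> I)" .
  then show ?thesis
    unfolding Sq_morphism_on_def by (meson lifts_unique)
qed

end
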